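(* Let $\mathcal{X}$ be a non-empty set and $\mathcal{B}\subseteq\mathcal{P}(\mathcal{X})\setminus\{\emptyset\}$ such that $\mathcal{B}^*:=\mathcal{B}\cup\{\emptyset\}$ is a sigma field. Then for any $g\in\mathcal{G}_{\geq0}(\mathcal{X})$, $g$ is $\mathcal{B}^*$-measurable in the usual measure-theoretic sense if and only if $g$ is $\mathcal{B}$-measurable in the sense defined below.
   Context: $\mathcal{G}_{\geq0}(\mathcal{X})$ is the set of bounded non-negative real functions on $\mathcal{X}$; $\mathbb{I}_B$ is the indicator of $B$. A function $g\in\mathcal{G}_{\geq0}(\mathcal{X})$ is simple $\mathcal{B}$-measurable if there are $c_0\geq0$, $n\in\mathbb{N}\cup\{0\}$ and, for $k=1,\dots,n$, $c_k\geq0$ and $B_k\in\mathcal{B}$ with $g=c_0+\sum_{k=1}^nc_k\mathbb{I}_{B_k}$. A function $g\in\mathcal{G}_{\geq0}(\mathcal{X})$ is $\mathcal{B}$-measurable if there is a sequence $(g_n)_{n\in\mathbb{N}}$ of simple $\mathcal{B}$-measurable functions in $\mathcal{G}_{\geq0}(\mathcal{X})$ with $\lim_{n\to\infty}\sup_{x}|g(x)-g_n(x)|=0$. *)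

theory Defs
  imports "HOL-Analysis.Analysis"
begin

definition G_nonneg :: "'a set \<Rightarrow> ('a \<Rightarrow> real) set" where
  "G_nonneg X = {g. (\<forall>x\<in>X. 0 \<le> g x) \<and> (\<exists>M. \<forall>x\<in>X. \<bar>g x\<bar> \<le> M)}"

definition simple_B_measurable :: "'a set \<Rightarrow> 'a set set \<Rightarrow> ('a \<Rightarrow> real) \<Rightarrow> bool" where
  "simple_B_measurable X B g \<longleftrightarrow> g \<in> G_nonneg X \<and>
     (\<exists>(c0::real) (n::nat) (c::nat \<Rightarrow> real) (Bs::nat \<Rightarrow> 'a set).
        c0 \<ge> 0 \<and> (\<forall>k\<in>{1..n}. c k \<ge> 0 \<and> Bs k \<in> B) \<and>
        (\<forall>x\<in>X. g x = c0 + (\<Sum>k=1..n. c k * indicator (Bs k) x)))"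

definition B_measurable :: "'a set \<Rightarrow> 'a set set \<Rightarrow> ('a \<Rightarrow> real) \<Rightarrow> bool" where
  "B_measurable X B g \<longleftrightarrow> g \<in> G_nonneg X \<and>
     (\<exists>gs::nat \<Rightarrow> 'a \<Rightarrow> real. (\<forall>n. simple_B_measurable X B (gs n)) \<and>
        (\<lambda>n. SUP x\<in>X. \<bar>g x - gs n x\<bar>) \<longlonglongrightarrow> 0)"

end

theory Submission
  imports Defs
begin

text \<open>A \<open>B\<^sup>*\<close>-measurable \<open>g\<close> is the uniform limit of its staircase approximations
  \<open>\<Sum>\<^sub>j h \<cdot> 1{g \<ge> j h}\<close> with step \<open>h = 1/(n+1)\<close>, whose level sets lie in \<open>B \<union> {\<emptyset>}\<close>;
  empty level sets are traded for \<open>X \<in> B\<close> with coefficient \<open>0\<close>.  Conversely, simple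
  \<open>B\<close>-measurable functions are measurable, and a uniform limit is in particular a
  pointwise limit.\<close>

lemma SUP_abs_diff_tendsto_imp_tendsto:
  fixes f :: "'a \<Rightarrow> real"
  assumes "\<And>n. bdd_above ((\<lambda>x. \<bar>f x - fs n x\<bar>) ` X)"
    and "(\<lambda>n. SUP x\<in>X. \<bar>f x - fs n x\<bar>) \<longlonglongrightarrow> 0" and "x \<in> X"
  shows "(\<lambda>n. fs n x) \<longlonglongrightarrow> f x"
proof -
  have "\<bar>fs n x - f x\<bar> \<le> (SUP x\<in>X. \<bar>f x - fs n x\<bar>)" for n
    using cSUP_upper[of x X "\<lambda>x. \<bar>f x - fs n x\<bar>"] assms(1,3)
    by (simp add: abs_minus_commute)
  then have "(\<lambda>n. fs n x - f x) \<longlonglongrightarrow> 0"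
    by (intro Lim_null_comparison[OF _ assms(2)]) simp
  then show ?thesis by (rule LIM_zero_cancel)
qed

lemma SUP_abs_tendsto_zero_uniform:
  fixes f :: "nat \<Rightarrow> 'a \<Rightarrow> real"
  assumes "X \<noteq> {}" "\<And>n x. x \<in> X \<Longrightarrow> \<bar>f n x\<bar> \<le> e n" "e \<longlonglongrightarrow> 0"
  shows "(\<lambda>n. SUP x\<in>X. \<bar>f n x\<bar>) \<longlonglongrightarrow> 0"
proof (rule Lim_null_comparison[OF _ assms(3)], intro always_eventually allI)
  fix n
  obtain x where x: "x \<in> X" using assms(1) by blast
  have "bdd_above ((\<lambda>x. \<bar>f n x\<bar>) ` X)"
    using assms(2) by (intro bdd_aboveI[where M="e n"]) auto
  then have "0 \<le> (SUP x\<in>X. \<bar>f n x\<bar>)"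
    using cSUP_upper[OF x] abs_ge_zero order_trans by blast
  moreover have "(SUP x\<in>X. \<bar>f n x\<bar>) \<le> e n"
    using assms(1,2) by (intro cSUP_least) auto
  ultimately show "norm (SUP x\<in>X. \<bar>f n x\<bar>) \<le> e n" by simp
qed

lemma staircase_approx:
  fixes h v :: real
  assumes "0 < h" "0 \<le> v" "v \<le> real N * h"
  shows "0 \<le> v - (\<Sum>j=1..N. if real j * h \<le> v then h else 0)"
    and "v - (\<Sum>j=1..N. if real j * h \<le> v then h else 0) \<le> h"
proof -
  define k where "k = nat \<lfloor>v / h\<rfloor>"
  have "real k = of_int \<lfloor>v / h\<rfloor>"
    unfolding k_def using assms(1,2) by simp
  then have k: "real k \<le> v / h" "v / h < real k + 1"
    using of_int_floor_le[of "v / h"] real_of_int_floor_add_one_gt[of "v / h"] by linarith+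
  have level_iff: "real j * h \<le> v \<longleftrightarrow> j \<le> k" for j
  proof -
    have "real j * h \<le> v \<longleftrightarrow> real j \<le> v / h"
      using assms(1) by (simp add: le_divide_eq)
    also have "\<dots> \<longleftrightarrow> int j \<le> \<lfloor>v / h\<rfloor>"
      by (simp add: le_floor_iff)
    also have "\<dots> \<longleftrightarrow> j \<le> k"
      unfolding k_def using assms(1,2) by (simp add: le_nat_iff)
    finally show ?thesis .
  qed
  have "v / h \<le> real N"
    using assms(1,3) by (simp add: divide_le_eq)
  then have "k \<le> N"
    using k(1) by linarith
  then have "{j\<in>{1..N}. real j * h \<le> v} = {1..k}"
    unfolding level_iff by auto
  moreover have "(\<Sum>j=1..N. if real j * h \<le> v then h else 0)
      = (\<Sum>j\<in>{j\<in>{1..N}. real j * h \<le> v}. h)"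
    by (rule sum.inter_filter[symmetric]) simp
  ultimately have "(\<Sum>j=1..N. if real j * h \<le> v then h else 0) = real k * h"
    by simp
  moreover have "real k * h \<le> v" "v < real k * h + h"
    using k assms(1) by (simp_all add: field_simps)
  ultimately show "0 \<le> v - (\<Sum>j=1..N. if real j * h \<le> v then h else 0)"
    and "v - (\<Sum>j=1..N. if real j * h \<le> v then h else 0) \<le> h" by simp_all
qed

lemma simple_B_measurable_sum_indicator:
  fixes n :: nat
  assumes "X \<in> B" "0 \<le> c0" "\<forall>k\<in>{1..n}. 0 \<le> c k \<and> Bs k \<in> insert {} B"
  shows "simple_B_measurable X B (\<lambda>x. c0 + (\<Sum>k=1..n. c k * indicator (Bs k) x))"
proof -
  let ?f = "\<lambda>x. c0 + (\<Sum>k=1..n. c k * indicator (Bs k) x)"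
  have nonneg: "0 \<le> ?f x" for x
    using assms(2,3) by (intro add_nonneg_nonneg sum_nonneg) auto
  have "?f x \<le> c0 + (\<Sum>k=1..n. c k)" for x
    using assms(3) by (intro add_left_mono sum_mono) (auto simp: indicator_def)
  with nonneg have "\<forall>x\<in>X. \<bar>?f x\<bar> \<le> c0 + (\<Sum>k=1..n. c k)"
    by simp
  with nonneg have bounded: "?f \<in> G_nonneg X"
    unfolding G_nonneg_def by blast
  define c' where "c' k = (if Bs k = {} then 0 else c k)" for k
  define Bs' where "Bs' k = (if Bs k = {} then X else Bs k)" for k
  have coeffs: "\<forall>k\<in>{1..n}. 0 \<le> c' k \<and> Bs' k \<in> B"
    using assms(1,3) unfolding c'_def Bs'_def by auto
  have "c k * indicator (Bs k) x = c' k * indicator (Bs' k) x" for k x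
    unfolding c'_def Bs'_def by simp
  then have repr: "\<forall>x\<in>X. ?f x = c0 + (\<Sum>k=1..n. c' k * indicator (Bs' k) x)"
    by simp
  show ?thesis
    unfolding simple_B_measurable_def
    using bounded assms(2) coeffs repr by blast
qed

lemma simple_B_measurable_borel_measurable:
  assumes "space M = X" "B \<subseteq> sets M" "simple_B_measurable X B f"
  shows "f \<in> borel_measurable M"
proof -
  obtain c0 and n :: nat and c Bs where
    rep: "\<forall>k\<in>{1..n}. 0 \<le> c k \<and> Bs k \<in> B"
      "\<forall>x\<in>X. f x = c0 + (\<Sum>k=1..n. c k * indicator (Bs k) x)"
    using assms(3) unfolding simple_B_measurable_def by blast
  have "(\<lambda>x. c0 + (\<Sum>k=1..n. c k * indicator (Bs k) x)) \<in> borel_measurable M"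
    using rep(1) assms(2) by (intro borel_measurable_add borel_measurable_sum
        borel_measurable_times borel_measurable_indicator) auto
  then show ?thesis
    by (rule measurable_cong[THEN iffD1, rotated]) (use rep(2) assms(1) in simp)
qed

lemma bdd_above_abs_diff_G_nonneg:
  assumes "f \<in> G_nonneg X" "h \<in> G_nonneg X"
  shows "bdd_above ((\<lambda>x. \<bar>f x - h x\<bar>) ` X)"
proof -
  obtain Mf Mh where "\<forall>x\<in>X. \<bar>f x\<bar> \<le> Mf" "\<forall>x\<in>X. \<bar>h x\<bar> \<le> Mh"
    using assms unfolding G_nonneg_def by blast
  then have "\<forall>x\<in>X. \<bar>f x - h x\<bar> \<le> Mf + Mh"
    by (smt (verit))
  then show ?thesis by (auto intro: bdd_aboveI)
qed

lemma B_measurable_borel_measurable: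
  assumes "space M = X" "B \<subseteq> sets M" "B_measurable X B g"
  shows "g \<in> borel_measurable M"
proof -
  obtain gs where g: "g \<in> G_nonneg X" and gs: "\<And>n. simple_B_measurable X B (gs n)"
    and lim: "(\<lambda>n. SUP x\<in>X. \<bar>g x - gs n x\<bar>) \<longlonglongrightarrow> 0"
    using assms(3) unfolding B_measurable_def by blast
  have gs_bounded: "gs n \<in> G_nonneg X" for n
    using gs unfolding simple_B_measurable_def by blast
  show ?thesis
  proof (rule borel_measurable_LIMSEQ_real[where u=gs])
    show "(\<lambda>n. gs n x) \<longlonglongrightarrow> g x" if "x \<in> space M" for x
      using bdd_above_abs_diff_G_nonneg[OF g gs_bounded] lim that[unfolded assms(1)]
      by (rule SUP_abs_diff_tendsto_imp_tendsto)
    show "gs n \<in> borel_measurable M" for n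
      using simple_B_measurable_borel_measurable[OF assms(1,2) gs] .
  qed
qed

lemma borel_measurable_B_measurable:
  assumes "X \<noteq> {}" "space M = X" "sets M \<subseteq> insert {} B"
    and "g \<in> G_nonneg X" "g \<in> borel_measurable M"
  shows "B_measurable X B g"
proof -
  have XB: "X \<in> B"
    using sets.top[of M] assms(1-3) by auto
  obtain M0 where M0: "\<forall>x\<in>X. 0 \<le> g x \<and> g x \<le> M0"
    using assms(4) unfolding G_nonneg_def by (fastforce dest: abs_le_D1)
  define d where "d n = 1 / real (Suc n)" for n
  define N where "N n = nat \<lceil>M0 / d n\<rceil>" for n
  define L where "L n j = {x\<in>X. real j * d n \<le> g x}" for n j
  define gs where "gs n x = 0 + (\<Sum>j=1..N n. d n * indicator (L n j) x)" for n x
  have d_pos: "0 < d n" for n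
    unfolding d_def by simp
  have L_sets: "L n j \<in> insert {} B" for n j
  proof -
    have "g -` {real j * d n..} \<inter> space M \<in> sets M"
      using measurable_sets[OF assms(5)] by simp
    also have "g -` {real j * d n..} \<inter> space M = L n j"
      unfolding L_def assms(2) by auto
    finally show ?thesis using assms(3) by blast
  qed
  have simple: "simple_B_measurable X B (gs n)" for n
    unfolding gs_def[abs_def] using XB d_pos L_sets
    by (intro simple_B_measurable_sum_indicator) (auto simp: less_imp_le)
  have error: "\<bar>g x - gs n x\<bar> \<le> d n" if "x \<in> X" for n x
  proof -
    have "M0 / d n \<le> real (N n)"
      unfolding N_def by (rule real_nat_ceiling_ge)
    then have "M0 \<le> real (N n) * d n"
      using d_pos[of n] by (simp add: divide_le_eq)
    then have "g x \<le> real (N n) * d n"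
      using M0 that by force
    moreover have "gs n x = (\<Sum>j=1..N n. if real j * d n \<le> g x then d n else 0)"
      unfolding gs_def L_def using that by (intro add_0_left[THEN trans] sum.cong) auto
    ultimately show ?thesis
      using staircase_approx[OF d_pos, of "g x" "N n"] M0 that by (simp add: abs_le_iff)
  qed
  have "d \<longlonglongrightarrow> 0"
    unfolding d_def using LIMSEQ_inverse_real_of_nat by (simp add: inverse_eq_divide)
  then have "(\<lambda>n. SUP x\<in>X. \<bar>g x - gs n x\<bar>) \<longlonglongrightarrow> 0"
    using assms(1) error by (intro SUP_abs_tendsto_zero_uniform[where e=d])
  then show ?thesis
    unfolding B_measurable_def using assms(4) simple by blast
qed

theorem proposition3:
  fixes X :: "'a set" and B :: "'a set set" and g :: "'a \<Rightarrow> real"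
  assumes "X \<noteq> {}"
    and "B \<subseteq> Pow X - {{}}"
    and "sigma_algebra X (insert {} B)"
    and "g \<in> G_nonneg X"
  shows "g \<in> borel_measurable (sigma X (insert {} B))
         \<longleftrightarrow> B_measurable X B g"
proof -
  let ?M = "sigma X (insert {} B)"
  have sets: "sets ?M = insert {} B" and space: "space ?M = X"
    using sigma_algebra.sets_measure_of_eq[OF assms(3)]
      sigma_algebra.space_measure_of_eq[OF assms(3)] by simp_all
  show ?thesis
    using borel_measurable_B_measurable[OF assms(1) space _ assms(4)]
      B_measurable_borel_measurable[OF space] sets by blast
qed

end
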